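(* Let $(G_n)$ be a sequence of weighted graphs, $G_n$ on vertex set $[n]$ with edge weights $\beta_{ij}(n)$, with $\beta_{\max}=\sup_{i,j,n}\beta_{ij}(n)<\infty$ and $G_n\to W$ for an irreducible graphon $W$, and let $k\ge2$ be a constant. Then there is a constant $\sigma>0$ such that, for all sufficiently large $n$, at most $n/(10\beta_{\max})$ vertices $v$ of $G_n$ have weighted degree $d_v=\sum_w\beta_{vw}(n)$ less than $50k\beta_{\max}\sigma n$.
   Context: A weighted graph $G$ on a finite set $V$ is a symmetric function $(v,w)\mapsto\beta_{vw}$ from $V\times V$ to $[0,\infty)$ with $\beta_{vv}=0$. For a finite simple graph $F$ on $[k]$, $t(F,G)=|V|^{-k}\sum_{v_1,\dots,v_k\in V}\prod_{ij\in E(F)}\beta_{v_iv_j}$. A graphon is a bounded symmetric measurable $W:[0,1]^2\to[0,\infty)$, with $t(F,W)=\int\prod_{ij\in E(F)}W(x_i,x_j)\prod_i dx_i$; $G_n\to W$ means $t(F,G_n)\to t(F,W)$ for every finite simple graph $F$. $W$ is irreducible if there is no measurable $A\subset[0,1]$ with $0<\mu(A)<1$ and $W=0$ a.e. on $A\times A^c$. *)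

theory Defs
  imports "HOL-Analysis.Analysis"
begin

text \<open>A weighted graph on the vertex set [n] = {0..<n} is given by a weight function
  b :: nat => nat => real (only values on [n] x [n] matter).\<close>
definition weighted_graph :: "nat \<Rightarrow> (nat \<Rightarrow> nat \<Rightarrow> real) \<Rightarrow> bool" where
  "weighted_graph n b \<longleftrightarrow>
     (\<forall>i<n. \<forall>j<n. b i j \<ge> 0 \<and> b i j = b j i) \<and> (\<forall>i<n. b i i = 0)"

definition simple_graph :: "nat \<Rightarrow> (nat \<times> nat) set \<Rightarrow> bool" where
  "simple_graph m E \<longleftrightarrow> E \<subseteq> {(i, j). i < j \<and> j < m}"

definition hom_density_graph ::
  "nat \<Rightarrow> (nat \<times> nat) set \<Rightarrow> nat \<Rightarrow> (nat \<Rightarrow> nat \<Rightarrow> real) \<Rightarrow> real" where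
  "hom_density_graph m E n b =
     (\<Sum>v\<in>PiE {..<m} (\<lambda>_. {..<n}). \<Prod>(i, j)\<in>E. b (v i) (v j)) / real n ^ m"

definition hom_density_graphon ::
  "nat \<Rightarrow> (nat \<times> nat) set \<Rightarrow> (real \<Rightarrow> real \<Rightarrow> real) \<Rightarrow> real" where
  "hom_density_graphon m E W =
     integral\<^sup>L (PiM {..<m} (\<lambda>_. restrict_space lborel {0..1}))
       (\<lambda>x. \<Prod>(i, j)\<in>E. W (x i) (x j))"

definition unit_square :: "(real \<times> real) set" where
  "unit_square = {0..1} \<times> {0..1}"

definition graphon :: "(real \<Rightarrow> real \<Rightarrow> real) \<Rightarrow> bool" where
  "graphon W \<longleftrightarrow>
     (\<lambda>p. W (fst p) (snd p)) \<in> borel_measurable (restrict_space (lborel \<Otimes>\<^sub>M lborel) unit_square)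
     \<and> (\<forall>x\<in>{0..1}. \<forall>y\<in>{0..1}. W x y = W y x \<and> W x y \<ge> 0)
     \<and> (\<exists>B. \<forall>x\<in>{0..1}. \<forall>y\<in>{0..1}. W x y \<le> B)"

definition irreducible_graphon :: "(real \<Rightarrow> real \<Rightarrow> real) \<Rightarrow> bool" where
  "irreducible_graphon W \<longleftrightarrow>
     \<not> (\<exists>A. A \<in> sets lborel \<and> A \<subseteq> {0..1} \<and> 0 < measure lborel A \<and> measure lborel A < 1 \<and>
          (AE p in lborel \<Otimes>\<^sub>M lborel. p \<in> A \<times> ({0..1} - A) \<longrightarrow> W (fst p) (snd p) = 0))"

definition graph_seq_converges ::
  "(nat \<Rightarrow> nat \<Rightarrow> nat \<Rightarrow> real) \<Rightarrow> (real \<Rightarrow> real \<Rightarrow> real) \<Rightarrow> bool" where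
  "graph_seq_converges \<beta> W \<longleftrightarrow>
     (\<forall>m E. simple_graph m E \<longrightarrow>
        (\<lambda>n. hom_density_graph m E n (\<beta> n)) \<longlonglongrightarrow> hom_density_graphon m E W)"

definition beta_max :: "(nat \<Rightarrow> nat \<Rightarrow> nat \<Rightarrow> real) \<Rightarrow> real" where
  "beta_max \<beta> = Sup {\<beta> n i j | n i j. i < n \<and> j < n}"

definition wdeg :: "nat \<Rightarrow> (nat \<Rightarrow> nat \<Rightarrow> real) \<Rightarrow> nat \<Rightarrow> real" where
  "wdeg n b v = (\<Sum>w<n. b v w)"

end

theory Submission
  imports Defs "HOL-Probability.Probability_Measure" "HOL-Computational_Algebra.Polynomial"
begin

(* The homomorphism density of the star K_{1,j} in G_n is the j-th moment of the normalised
   degree d_v/n of a uniform random vertex, and in W it is the j-th moment of the graphon degree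
   d(x) = int W(x,y) dy.  Hence (1/n) sum_v p(d_v/n) -> int p(d(x)) dx for every polynomial p.
   Irreducibility forces d > 0 almost everywhere, so by dominated convergence
   int (1 - d(x)/B)^K dx -> 0 as K grows.  The polynomial p(t) = 2 (1 - t/B)^K is nonnegative
   on [0,B] and at least 1 on [0, B/(2(K+1))] (Bernoulli), so it bounds the number of vertices of
   small degree by n int p(d(x)) dx + o(n), which is below n/(10 beta_max) for K large. *)

definition star_edges :: "nat \<Rightarrow> (nat \<times> nat) set" where
  "star_edges j = (\<lambda>i. (i, j)) ` {..<j}"

lemma simple_graph_star_edges: "simple_graph (Suc j) (star_edges j)"
  unfolding simple_graph_def star_edges_def by auto

lemma sum_PiE_insert:
  assumes "j \<notin> I" "finite I"
  shows "(\<Sum>v\<in>PiE (insert j I) (\<lambda>_. S). f v) = (\<Sum>a\<in>S. \<Sum>g\<in>PiE I (\<lambda>_. S). f (g(j := a)))"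
proof -
  have "(\<Sum>v\<in>PiE (insert j I) (\<lambda>_. S). f v) = (\<Sum>(a, g)\<in>S \<times> PiE I (\<lambda>_. S). f (g(j := a)))"
    unfolding PiE_insert_eq
    by (subst sum.reindex) (use inj_combinator[OF assms(1), of "\<lambda>_. S"] in \<open>auto simp: case_prod_beta\<close>)
  then show ?thesis
    by (simp add: sum.cartesian_product)
qed

lemma hom_density_graph_star:
  assumes "weighted_graph n b"
  shows "hom_density_graph (Suc j) (star_edges j) n b = (\<Sum>a<n. (wdeg n b a / n) ^ j) / n"
proof -
  have sym: "b w a = b a w" if "w < n" "a < n" for w a
    using assms that unfolding weighted_graph_def by auto
  have "(\<Sum>v\<in>PiE {..<Suc j} (\<lambda>_. {..<n}). \<Prod>(p, q)\<in>star_edges j. b (v p) (v q))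
      = (\<Sum>v\<in>PiE (insert j {..<j}) (\<lambda>_. {..<n}). \<Prod>i<j. b (v i) (v j))"
    unfolding star_edges_def by (subst prod.reindex) (auto simp: inj_on_def lessThan_Suc)
  also have "\<dots> = (\<Sum>a<n. \<Sum>g\<in>PiE {..<j} (\<lambda>_. {..<n}). \<Prod>i<j. b (g i) a)"
    by (subst sum_PiE_insert) (auto intro!: sum.cong prod.cong)
  also have "\<dots> = (\<Sum>a<n. \<Prod>i<j. \<Sum>w<n. b w a)"
    by (intro sum.cong refl, subst prod_sum_PiE) auto
  also have "\<dots> = (\<Sum>a<n. wdeg n b a ^ j)"
    unfolding wdeg_def by (auto intro!: sum.cong simp: sym)
  finally show ?thesis
    unfolding hom_density_graph_def
    by (simp add: sum_divide_distrib[symmetric] field_simps)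
qed

lemma wdeg_nonneg: "weighted_graph n b \<Longrightarrow> v < n \<Longrightarrow> 0 \<le> wdeg n b v"
  unfolding wdeg_def weighted_graph_def by (auto intro: sum_nonneg)

lemma wdeg_le:
  assumes "\<And>w. w < n \<Longrightarrow> b v w \<le> B"
  shows "wdeg n b v \<le> n * B"
  using sum_mono[of "{..<n}" "b v" "\<lambda>_. B"] assms unfolding wdeg_def by simp

lemma beta_max_upper:
  assumes "bdd_above {\<beta> n i j | n i j. i < n \<and> j < n}" "i < n" "j < n"
  shows "\<beta> n i j \<le> beta_max \<beta>"
  unfolding beta_max_def by (rule cSup_upper[OF _ assms(1)]) (use assms in blast)

lemma beta_max_nonneg:
  assumes "\<And>n. weighted_graph n (\<beta> n)" "bdd_above {\<beta> n i j | n i j. i < n \<and> j < n}"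
  shows "0 \<le> beta_max \<beta>"
  using beta_max_upper[OF assms(2), of 0 1 0] assms(1)[of 1] unfolding weighted_graph_def by simp

lemma card_low_wdeg_le_sum_poly:
  fixes p :: "real poly"
  assumes "weighted_graph n b" "\<And>v w. v < n \<Longrightarrow> w < n \<Longrightarrow> b v w \<le> B"
    and one_le_p: "\<And>t. 0 \<le> t \<Longrightarrow> t < \<epsilon> \<Longrightarrow> 1 \<le> poly p t"
    and p_nonneg: "\<And>t. 0 \<le> t \<Longrightarrow> t \<le> B \<Longrightarrow> 0 \<le> poly p t"
  shows "card {v. v < n \<and> wdeg n b v < \<epsilon> * n} \<le> (\<Sum>v<n. poly p (wdeg n b v / n))"
proof -
  let ?S = "{v. v < n \<and> wdeg n b v < \<epsilon> * n}"
  have deg_range: "0 \<le> wdeg n b v / n \<and> wdeg n b v / n \<le> B" if "v < n" for v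
    using wdeg_nonneg[OF assms(1) that] wdeg_le[of n b v B] assms(2) that
    by (simp add: divide_le_eq mult.commute)
  have "card ?S = (\<Sum>v\<in>?S. 1::real)" by simp
  also have "\<dots> \<le> (\<Sum>v\<in>?S. poly p (wdeg n b v / n))"
    using deg_range by (intro sum_mono one_le_p) (auto simp: divide_less_eq)
  also have "\<dots> \<le> (\<Sum>v<n. poly p (wdeg n b v / n))"
    using deg_range by (intro sum_mono2 p_nonneg) auto
  finally show ?thesis .
qed

lemma (in prob_space) tendsto_integral_power_zero:
  fixes f :: "'a \<Rightarrow> real"
  assumes [measurable]: "f \<in> borel_measurable M"
    and f_range: "\<And>x. x \<in> space M \<Longrightarrow> 0 \<le> f x \<and> f x \<le> 1"
    and "AE x in M. f x < 1"
  shows "(\<lambda>K. \<integral>x. f x ^ K \<partial>M) \<longlonglongrightarrow> 0"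
proof -
  have "(\<lambda>K. \<integral>x. f x ^ K \<partial>M) \<longlonglongrightarrow> (\<integral>x. 0 \<partial>M)"
  proof (rule integral_dominated_convergence[where w="\<lambda>_. 1"])
    show "AE x in M. (\<lambda>K. f x ^ K) \<longlonglongrightarrow> 0"
      using AE_space assms(3) by eventually_elim (use f_range in \<open>auto intro!: LIMSEQ_power_zero\<close>)
    show "AE x in M. norm (f x ^ K) \<le> 1" for K
      using f_range by (auto intro!: AE_I2 power_le_one)
  qed auto
  then show ?thesis
    by simp
qed

lemma one_le_two_mult_one_minus_power:
  fixes s :: real
  assumes "0 \<le> s" "s \<le> 1" "real K * s \<le> 1/2"
  shows "1 \<le> 2 * (1 - s) ^ K"
proof -
  have "1 - real K * s \<le> (1 - s) ^ K"
    using Bernoulli_inequality[of "- s" K] assms(2) by simp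
  with assms(3) show ?thesis
    by linarith
qed

lemma (in prob_space) obtain_poly_ge_one_near_zero_small_integral:
  fixes d :: "'a \<Rightarrow> real"
  assumes [measurable]: "d \<in> borel_measurable M"
    and d_range: "\<And>x. x \<in> space M \<Longrightarrow> 0 \<le> d x \<and> d x \<le> B"
    and d_pos: "AE x in M. 0 < d x" and "0 < B" "0 < \<delta>"
  obtains p :: "real poly" and \<epsilon> where "0 < \<epsilon>"
    "\<And>t. 0 \<le> t \<Longrightarrow> t < \<epsilon> \<Longrightarrow> 1 \<le> poly p t"
    "\<And>t. 0 \<le> t \<Longrightarrow> t \<le> B \<Longrightarrow> 0 \<le> poly p t"
    "(\<integral>x. poly p (d x) \<partial>M) < \<delta>"
proof -
  have "(\<lambda>K. \<integral>x. (1 - d x / B) ^ K \<partial>M) \<longlonglongrightarrow> 0"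
  proof (rule tendsto_integral_power_zero)
    show "AE x in M. 1 - d x / B < 1"
      using d_pos by eventually_elim (use \<open>0 < B\<close> in simp)
  qed (use d_range \<open>0 < B\<close> in auto)
  from order_tendstoD(2)[OF this, of "\<delta> / 2"] \<open>0 < \<delta>\<close>
  obtain K where K: "(\<integral>x. (1 - d x / B) ^ K \<partial>M) < \<delta> / 2"
    by (auto simp: eventually_sequentially)
  define p where "p = smult 2 ([:1, - 1 / B:] ^ K)"
  have poly_p: "poly p t = 2 * (1 - t / B) ^ K" for t
    unfolding p_def by (simp add: poly_power algebra_simps)
  show ?thesis
  proof
    show "0 < B / (2 * (real K + 1))"
      using \<open>0 < B\<close> by simp
    show "1 \<le> poly p t" if "0 \<le> t" "t < B / (2 * (real K + 1))" for t
    proof -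
      have "t * 1 \<le> t * (2 * (real K + 1))"
        using that(1) by (intro mult_left_mono) auto
      also have "\<dots> < B"
        using that(2) \<open>0 < B\<close> by (simp add: field_simps)
      finally have "t \<le> B"
        by simp
      have "real K * (t / B) \<le> real K * (1 / (2 * (real K + 1)))"
        using that \<open>0 < B\<close> by (intro mult_left_mono) (auto simp: field_simps)
      also have "\<dots> \<le> 1 / 2"
        by (simp add: field_simps)
      finally show ?thesis
        unfolding poly_p using that \<open>t \<le> B\<close> \<open>0 < B\<close>
        by (intro one_le_two_mult_one_minus_power) (auto simp: field_simps)
    qed
    show "0 \<le> poly p t" if "t \<le> B" for t
      unfolding poly_p using that \<open>0 < B\<close> by simp
    show "(\<integral>x. poly p (d x) \<partial>M) < \<delta>"
      unfolding poly_p using K by simp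
  qed
qed

abbreviation unit_interval_measure :: "real measure" where
  "unit_interval_measure \<equiv> restrict_space lborel {0..1}"

interpretation unit_interval: prob_space unit_interval_measure
  by (rule prob_space_restrict_space) auto

definition graphon_degree :: "(real \<Rightarrow> real \<Rightarrow> real) \<Rightarrow> real \<Rightarrow> real" where
  "graphon_degree W x = (\<integral>y. W y x \<partial>unit_interval_measure)"

context
  fixes W :: "real \<Rightarrow> real \<Rightarrow> real"
  assumes W: "graphon W"
begin

lemma graphon_nonneg: "x \<in> {0..1} \<Longrightarrow> y \<in> {0..1} \<Longrightarrow> 0 \<le> W x y"
  using W unfolding graphon_def by auto

lemma graphon_sym: "x \<in> {0..1} \<Longrightarrow> y \<in> {0..1} \<Longrightarrow> W x y = W y x"
  using W unfolding graphon_def by auto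

lemma graphon_bounded: obtains B where "\<And>x y. x \<in> {0..1} \<Longrightarrow> y \<in> {0..1} \<Longrightarrow> W x y \<le> B"
  using W unfolding graphon_def by blast

lemma borel_measurable_graphon_extension:
  "(\<lambda>p. if p \<in> unit_square then W (fst p) (snd p) else 0) \<in> borel_measurable (lborel \<Otimes>\<^sub>M lborel)"
proof -
  have "unit_square \<in> sets (lborel \<Otimes>\<^sub>M lborel)"
    unfolding unit_square_def by (intro pair_measureI) auto
  then show ?thesis
    using W measurable_restrict_space_iff[of unit_square "lborel \<Otimes>\<^sub>M lborel" 0 borel "\<lambda>p. W (fst p) (snd p)"]
    unfolding graphon_def by simp
qed

lemma borel_measurable_graphon [measurable]:
  "(\<lambda>p. W (fst p) (snd p)) \<in> borel_measurable (unit_interval_measure \<Otimes>\<^sub>M unit_interval_measure)"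
proof -
  have "(\<lambda>x. x) \<in> measurable unit_interval_measure lborel"
    by (intro measurable_restrict_space1 measurable_ident_sets) auto
  then have "(\<lambda>p. p) \<in> measurable (unit_interval_measure \<Otimes>\<^sub>M unit_interval_measure) (lborel \<Otimes>\<^sub>M lborel)"
    by (intro measurable_pair) (auto simp: comp_def)
  from measurable_comp[OF this borel_measurable_graphon_extension]
  show ?thesis
    by (rule measurable_cong[THEN iffD1, rotated]) (auto simp: space_pair_measure unit_square_def)
qed

lemma borel_measurable_graphon_section:
  assumes "x \<in> {0..1}"
  shows "(\<lambda>y. W y x) \<in> borel_measurable unit_interval_measure"
proof -
  have "(\<lambda>y. (y, x)) \<in> measurable unit_interval_measure (unit_interval_measure \<Otimes>\<^sub>M unit_interval_measure)"
    using assms by (intro measurable_Pair2') auto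
  from measurable_comp[OF this borel_measurable_graphon] show ?thesis
    by (simp add: comp_def)
qed

lemma integrable_graphon_section:
  assumes "x \<in> {0..1}"
  shows "integrable unit_interval_measure (\<lambda>y. W y x)"
proof -
  obtain B where "\<And>x y. x \<in> {0..1} \<Longrightarrow> y \<in> {0..1} \<Longrightarrow> W x y \<le> B"
    using graphon_bounded by blast
  with assms show ?thesis
    by (intro unit_interval.integrable_const_bound[where B=B])
       (auto intro!: borel_measurable_graphon_section simp: graphon_nonneg)
qed

lemma borel_measurable_graphon_degree [measurable]:
  "graphon_degree W \<in> borel_measurable unit_interval_measure"
proof -
  have "(\<lambda>p. (snd p, fst p)) \<in> measurable (unit_interval_measure \<Otimes>\<^sub>M unit_interval_measure)
      (unit_interval_measure \<Otimes>\<^sub>M unit_interval_measure)"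
    by measurable
  from measurable_comp[OF this borel_measurable_graphon]
  have "case_prod (\<lambda>x y. W y x) \<in> borel_measurable (unit_interval_measure \<Otimes>\<^sub>M unit_interval_measure)"
    by (simp add: comp_def case_prod_beta)
  then show ?thesis
    unfolding graphon_degree_def[abs_def] by (rule unit_interval.borel_measurable_lebesgue_integral)
qed

lemma graphon_degree_nonneg: "x \<in> {0..1} \<Longrightarrow> 0 \<le> graphon_degree W x"
  unfolding graphon_degree_def by (intro integral_nonneg_AE) (auto intro!: graphon_nonneg)

lemma graphon_degree_le:
  assumes "x \<in> {0..1}" "\<And>x y. x \<in> {0..1} \<Longrightarrow> y \<in> {0..1} \<Longrightarrow> W x y \<le> B"
  shows "graphon_degree W x \<le> B"
proof -
  have "graphon_degree W x \<le> (\<integral>y. B \<partial>unit_interval_measure)"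
    unfolding graphon_degree_def using assms
    by (intro integral_mono integrable_graphon_section) auto
  then show ?thesis
    using unit_interval.prob_space by simp
qed

lemma hom_density_graphon_star:
  "hom_density_graphon (Suc j) (star_edges j) W = (\<integral>x. graphon_degree W x ^ j \<partial>unit_interval_measure)"
proof -
  let ?U = unit_interval_measure
  interpret product_sigma_finite "\<lambda>_. ?U"
    by (simp add: product_sigma_finite_def unit_interval.sigma_finite_measure_axioms)
  have component: "(\<lambda>x. W (x i) (x l)) \<in> borel_measurable (PiM I (\<lambda>_. ?U))" if "i \<in> I" "l \<in> I" for i l :: nat and I
  proof -
    have "(\<lambda>x. (x i, x l)) \<in> measurable (PiM I (\<lambda>_. ?U)) (?U \<Otimes>\<^sub>M ?U)"
      using that by (intro measurable_Pair measurable_component_singleton)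
    from measurable_comp[OF this borel_measurable_graphon] show ?thesis
      by (simp add: comp_def)
  qed
  have degree_nn_integral: "(\<integral>\<^sup>+y. ennreal (W y x) \<partial>?U) = ennreal (graphon_degree W x)" if "x \<in> {0..1}" for x
    unfolding graphon_degree_def using that
    by (intro nn_integral_eq_integral integrable_graphon_section AE_I2) (auto intro: graphon_nonneg)
  have "hom_density_graphon (Suc j) (star_edges j) W = (\<integral>x. (\<Prod>i<j. W (x i) (x j)) \<partial>PiM {..<Suc j} (\<lambda>_. ?U))"
    unfolding hom_density_graphon_def star_edges_def
    by (intro Bochner_Integration.integral_cong refl, subst prod.reindex) (auto simp: inj_on_def)
  also have "\<dots> = enn2real (\<integral>\<^sup>+x. ennreal (\<Prod>i<j. W (x i) (x j)) \<partial>PiM {..<Suc j} (\<lambda>_. ?U))"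
    by (intro integral_eq_nn_integral borel_measurable_prod component AE_I2)
       (auto simp: space_PiM PiE_def Pi_def intro!: prod_nonneg graphon_nonneg)
  also have "(\<integral>\<^sup>+x. ennreal (\<Prod>i<j. W (x i) (x j)) \<partial>PiM {..<Suc j} (\<lambda>_. ?U))
      = (\<integral>\<^sup>+x. (\<Prod>i<j. ennreal (W (x i) (x j))) \<partial>PiM (insert j {..<j}) (\<lambda>_. ?U))"
    by (simp add: lessThan_Suc, intro nn_integral_cong prod_ennreal[symmetric])
       (auto simp: space_PiM PiE_def Pi_def intro!: graphon_nonneg)
  also have "\<dots> = (\<integral>\<^sup>+y. (\<integral>\<^sup>+x. (\<Prod>i<j. ennreal (W ((x(j := y)) i) ((x(j := y)) j))) \<partial>PiM {..<j} (\<lambda>_. ?U)) \<partial>?U)"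
    by (intro product_nn_integral_insert_rev borel_measurable_prod_ennreal measurable_compose[OF component]) auto
  also have "\<dots> = (\<integral>\<^sup>+y. (\<integral>\<^sup>+x. (\<Prod>i<j. ennreal (W (x i) y)) \<partial>PiM {..<j} (\<lambda>_. ?U)) \<partial>?U)"
    by (intro nn_integral_cong prod.cong refl) auto
  also have "\<dots> = (\<integral>\<^sup>+y. (\<Prod>i<j. (\<integral>\<^sup>+x. ennreal (W x y) \<partial>?U)) \<partial>?U)"
    by (intro nn_integral_cong product_nn_integral_prod)
       (auto intro!: measurable_compose[OF borel_measurable_graphon_section])
  also have "\<dots> = (\<integral>\<^sup>+y. ennreal (graphon_degree W y ^ j) \<partial>?U)"
    by (intro nn_integral_cong) (auto simp: degree_nn_integral graphon_degree_nonneg ennreal_power)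
  also have "enn2real \<dots> = (\<integral>x. graphon_degree W x ^ j \<partial>?U)"
    by (intro integral_eq_nn_integral[symmetric] AE_I2) (auto simp: graphon_degree_nonneg)
  finally show ?thesis .
qed

lemma irreducible_graphon_small_isolated_set_null:
  assumes irreducible: "irreducible_graphon W"
    and B: "B \<in> sets lborel" "B \<subseteq> {0..1}" "measure lborel B < 1"
    and isolated: "\<And>x. x \<in> B \<Longrightarrow> AE y in unit_interval_measure. W y x = 0"
  shows "measure lborel B = 0"
proof -
  let ?P = "\<lambda>p. p \<in> B \<times> ({0..1} - B) \<longrightarrow> W (fst p) (snd p) = 0"
  have "{p \<in> space (lborel \<Otimes>\<^sub>M lborel). ?P p}
      = {p \<in> space (lborel \<Otimes>\<^sub>M lborel). p \<in> B \<times> ({0..1} - B) \<longrightarrow>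
           (if p \<in> unit_square then W (fst p) (snd p) else 0) = 0}"
    using B by (auto simp: unit_square_def)
  also have "\<dots> \<in> sets (lborel \<Otimes>\<^sub>M lborel)"
    using B borel_measurable_graphon_extension by measurable
  finally have P_sets: "{p \<in> space (lborel \<Otimes>\<^sub>M lborel). ?P p} \<in> sets (lborel \<Otimes>\<^sub>M lborel)" .
  have "AE x in lborel. AE y in lborel. ?P (x, y)"
  proof (rule AE_I2)
    fix x
    show "AE y in lborel. ?P (x, y)"
    proof (cases "x \<in> B")
      case True
      with isolated have "AE y in lborel. y \<in> {0..1} \<longrightarrow> W y x = 0"
        by (simp add: AE_restrict_space_iff)
      then show ?thesis
        by eventually_elim (use True B graphon_sym in auto)
    qed simp
  qed
  then have "AE p in lborel \<Otimes>\<^sub>M lborel. ?P p"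
    by (intro pair_sigma_finite.AE_pair_measure[OF _ P_sets])
       (simp add: pair_sigma_finite_def lborel.sigma_finite_measure_axioms)
  with irreducible B have "\<not> 0 < measure lborel B"
    unfolding irreducible_graphon_def by blast
  then show ?thesis
    using measure_nonneg[of lborel B] by linarith
qed

lemma irreducible_graphon_isolated_set_null:
  assumes "irreducible_graphon W"
    and B: "B \<in> sets lborel" "B \<subseteq> {0..1}"
    and isolated: "\<And>x. x \<in> B \<Longrightarrow> AE y in unit_interval_measure. W y x = 0"
  shows "measure lborel B = 0"
proof -
  have half_null: "measure lborel (B \<inter> {a..a + 1/2}) = 0" if "0 \<le> a" "a \<le> 1/2" for a :: real
  proof (rule irreducible_graphon_small_isolated_set_null)
    have "measure lborel (B \<inter> {a..a + 1/2}) \<le> measure lborel {a..a + 1/2}"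
      using B fmeasurable_cbox[of a "a + 1/2"] by (intro measure_mono_fmeasurable) auto
    then show "measure lborel (B \<inter> {a..a + 1/2}) < 1"
      by simp
  qed (use assms that in auto)
  have "B = (B \<inter> {0..1/2}) \<union> (B \<inter> {1/2..1})"
    using B by auto
  then have "measure lborel B \<le> measure lborel (B \<inter> {0..1/2}) + measure lborel (B \<inter> {1/2..1})"
    by (metis measure_Un_le B(1) sets.Int atLeastAtMost_borel sets_lborel)
  then show ?thesis
    using half_null[of 0, simplified] half_null[of "1/2", simplified] measure_nonneg[of lborel B]
    by linarith
qed

lemma AE_graphon_degree_pos:
  assumes "irreducible_graphon W"
  shows "AE x in unit_interval_measure. 0 < graphon_degree W x"
proof -
  let ?Z = "{x \<in> {0..1}. graphon_degree W x = 0}"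
  have "?Z = graphon_degree W -` {0} \<inter> space unit_interval_measure"
    by auto
  then have Z_events: "?Z \<in> sets unit_interval_measure"
    using measurable_sets[OF borel_measurable_graphon_degree] by simp
  then have Z_sets: "?Z \<in> sets lborel"
    by (subst (asm) sets_restrict_space_iff) auto
  have "AE y in unit_interval_measure. W y x = 0" if "x \<in> ?Z" for x
  proof -
    have x: "x \<in> {0..1}" "graphon_degree W x = 0"
      using that by auto
    have "AE y in unit_interval_measure. 0 \<le> W y x"
      using x by (auto intro!: AE_I2 graphon_nonneg)
    from integral_nonneg_eq_0_iff_AE[OF integrable_graphon_section[OF x(1)] this] x(2)
    show ?thesis
      unfolding graphon_degree_def by simp
  qed
  then have "measure lborel ?Z = 0"
    by (intro irreducible_graphon_isolated_set_null Z_sets assms) auto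
  then have "measure unit_interval_measure ?Z = 0"
    using Z_sets by (subst measure_restrict_space) auto
  moreover have "{x \<in> space unit_interval_measure. \<not> 0 < graphon_degree W x} = ?Z"
    using graphon_degree_nonneg by force
  ultimately show ?thesis
    using Z_events by (simp add: AE_iff_measurable unit_interval.emeasure_eq_measure)
qed

end

context
  fixes \<beta> :: "nat \<Rightarrow> nat \<Rightarrow> nat \<Rightarrow> real" and W :: "real \<Rightarrow> real \<Rightarrow> real"
  assumes weighted: "\<And>n. weighted_graph n (\<beta> n)"
    and W: "graphon W"
    and converges: "graph_seq_converges \<beta> W"
begin

lemma tendsto_degree_moment:
  "(\<lambda>n. (\<Sum>v<n. (wdeg n (\<beta> n) v / n) ^ j) / n) \<longlonglongrightarrow> (\<integral>x. graphon_degree W x ^ j \<partial>unit_interval_measure)"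
proof -
  have "(\<lambda>n. hom_density_graph (Suc j) (star_edges j) n (\<beta> n)) \<longlonglongrightarrow> hom_density_graphon (Suc j) (star_edges j) W"
    using converges simple_graph_star_edges unfolding graph_seq_converges_def by blast
  then show ?thesis
    by (simp add: hom_density_graph_star[OF weighted] hom_density_graphon_star[OF W])
qed

lemma tendsto_degree_poly:
  "(\<lambda>n. (\<Sum>v<n. poly p (wdeg n (\<beta> n) v / n)) / n) \<longlonglongrightarrow> (\<integral>x. poly p (graphon_degree W x) \<partial>unit_interval_measure)"
proof -
  obtain B where B: "\<And>x y. x \<in> {0..1} \<Longrightarrow> y \<in> {0..1} \<Longrightarrow> W x y \<le> B"
    using graphon_bounded[OF W] by blast
  have integrable_moment: "integrable unit_interval_measure (\<lambda>x. graphon_degree W x ^ i)" for i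
    using B graphon_degree_le[OF W] graphon_degree_nonneg[OF W] borel_measurable_graphon_degree[OF W]
    by (intro unit_interval.integrable_const_bound[where B="B ^ i"] AE_I2) (auto intro!: power_mono)
  have "(\<lambda>n. \<Sum>i\<le>degree p. coeff p i * ((\<Sum>v<n. (wdeg n (\<beta> n) v / n) ^ i) / n))
      \<longlonglongrightarrow> (\<Sum>i\<le>degree p. coeff p i * (\<integral>x. graphon_degree W x ^ i \<partial>unit_interval_measure))"
    by (intro tendsto_sum tendsto_mult tendsto_const tendsto_degree_moment)
  moreover have "(\<Sum>i\<le>degree p. coeff p i * ((\<Sum>v<n. (wdeg n (\<beta> n) v / n) ^ i) / n))
      = (\<Sum>v<n. poly p (wdeg n (\<beta> n) v / n)) / n" for n
    unfolding poly_altdef sum_divide_distrib sum_distrib_left by (subst sum.swap) simp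
  moreover have "(\<Sum>i\<le>degree p. coeff p i * (\<integral>x. graphon_degree W x ^ i \<partial>unit_interval_measure))
      = (\<integral>x. poly p (graphon_degree W x) \<partial>unit_interval_measure)"
    unfolding poly_altdef using integrable_moment by simp
  ultimately show ?thesis
    by simp
qed

lemma eventually_card_low_wdeg_le:
  fixes \<delta> :: real
  assumes "irreducible_graphon W" and le_b: "\<And>n i j. i < n \<Longrightarrow> j < n \<Longrightarrow> \<beta> n i j \<le> b" and "0 < \<delta>"
  shows "\<exists>\<epsilon>>0. \<forall>\<^sub>F n in sequentially. real (card {v. v < n \<and> wdeg n (\<beta> n) v < \<epsilon> * real n}) \<le> \<delta> * real n"
proof -
  obtain C where C: "\<And>x y. x \<in> {0..1} \<Longrightarrow> y \<in> {0..1} \<Longrightarrow> W x y \<le> C"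
    using graphon_bounded[OF W] by blast
  define B where "B = max b C + 1"
  have "0 < B"
    using C[of 0 0] graphon_nonneg[OF W, of 0 0] by (simp add: B_def)
  obtain p :: "real poly" and \<epsilon> where "0 < \<epsilon>"
    and one_le_p: "\<And>t. 0 \<le> t \<Longrightarrow> t < \<epsilon> \<Longrightarrow> 1 \<le> poly p t"
    and p_nonneg: "\<And>t. 0 \<le> t \<Longrightarrow> t \<le> B \<Longrightarrow> 0 \<le> poly p t"
    and small: "(\<integral>x. poly p (graphon_degree W x) \<partial>unit_interval_measure) < \<delta>"
  proof (rule unit_interval.obtain_poly_ge_one_near_zero_small_integral[of "graphon_degree W" B \<delta>])
    show "0 \<le> graphon_degree W x \<and> graphon_degree W x \<le> B" if "x \<in> space unit_interval_measure" for x
      using that graphon_degree_nonneg[OF W] graphon_degree_le[OF W _ C] by (force simp: B_def)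
  qed (use borel_measurable_graphon_degree[OF W] AE_graphon_degree_pos[OF W assms(1)] \<open>0 < B\<close> \<open>0 < \<delta>\<close> in auto)
  from order_tendstoD(2)[OF tendsto_degree_poly small]
  have "\<forall>\<^sub>F n in sequentially. real (card {v. v < n \<and> wdeg n (\<beta> n) v < \<epsilon> * real n}) \<le> \<delta> * real n"
  proof eventually_elim
    case (elim n)
    have "real (card {v. v < n \<and> wdeg n (\<beta> n) v < \<epsilon> * real n}) \<le> (\<Sum>v<n. poly p (wdeg n (\<beta> n) v / n))"
      using le_b by (intro card_low_wdeg_le_sum_poly[OF weighted _ one_le_p p_nonneg]) (force simp: B_def)+
    also have "\<dots> \<le> \<delta> * real n"
      using elim by (cases "n = 0") (auto simp: field_simps)
    finally show ?case .
  qed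
  with \<open>0 < \<epsilon>\<close> show ?thesis
    by blast
qed

end

theorem lemma11:
  fixes \<beta> :: "nat \<Rightarrow> nat \<Rightarrow> nat \<Rightarrow> real"
    and W :: "real \<Rightarrow> real \<Rightarrow> real"
    and k :: nat
  assumes "\<And>n. weighted_graph n (\<beta> n)"
    and "bdd_above {\<beta> n i j | n i j. i < n \<and> j < n}"
    and "graphon W"
    and "irreducible_graphon W"
    and "graph_seq_converges \<beta> W"
    and "k \<ge> 2"
  shows "\<exists>\<sigma>>0. \<exists>N. \<forall>n\<ge>N.
           real (card {v. v < n \<and> wdeg n (\<beta> n) v < 50 * real k * beta_max \<beta> * \<sigma> * real n})
             \<le> real n / (10 * beta_max \<beta>)"
proof -
  let ?bmax = "beta_max \<beta>"
  show ?thesis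
  proof (cases "?bmax = 0")
    case True
    \<comment> \<open>Then the right-hand side is n / 0 = 0, so no vertex may have small degree.\<close>
    have "{v. v < n \<and> wdeg n (\<beta> n) v < 50 * real k * ?bmax * 1 * real n} = {}" for n
      using True wdeg_nonneg[OF assms(1)] by (force simp: not_less)
    with True show ?thesis
      by (intro exI[of _ 1]) simp
  next
    case False
    with beta_max_nonneg[OF assms(1,2)] have "0 < ?bmax"
      by simp
    then have "0 < 1 / (10 * ?bmax)"
      by simp
    from eventually_card_low_wdeg_le[OF assms(1,3,5,4) beta_max_upper[OF assms(2)] this]
    obtain \<epsilon> where "0 < \<epsilon>" and few_low:
      "\<forall>\<^sub>F n in sequentially. real (card {v. v < n \<and> wdeg n (\<beta> n) v < \<epsilon> * real n}) \<le> 1 / (10 * ?bmax) * real n"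
      by blast
    define \<sigma> where "\<sigma> = \<epsilon> / (50 * real k * ?bmax)"
    have "0 < \<sigma>" and \<sigma>: "50 * real k * ?bmax * \<sigma> = \<epsilon>"
      using \<open>0 < \<epsilon>\<close> \<open>0 < ?bmax\<close> assms(6) by (simp_all add: \<sigma>_def)
    from few_low obtain N where
      "\<And>n. N \<le> n \<Longrightarrow> real (card {v. v < n \<and> wdeg n (\<beta> n) v < \<epsilon> * real n}) \<le> 1 / (10 * ?bmax) * real n"
      unfolding eventually_sequentially by blast
    then show ?thesis
      using \<open>0 < \<sigma>\<close> by (intro exI[of _ \<sigma>] conjI exI[of _ N] allI impI) (simp_all add: \<sigma>)
  qed
qed

end
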